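(* Let $d\ge2$, $b:=2^d$, $N\in\mathbb{N}$, $L:=\min\{\ell\ge0:b^\ell\ge N\}$, and assume $L\ge3$. Then \[ S_{L-2}\le\frac{2^{d-1}}{2^{d-1}-1}\,2^{-L}\le2\cdot2^{-L}. \]
   Context: For $0\le\ell\le L-3$: $\Delta_\ell:=\frac{2^{2d-3}}{N}2^{\ell(d-1)}$, $S_0:=0$, $S_{\ell+1}:=S_\ell+\Delta_\ell$; thus $S_{L-2}=\sum_{\ell=0}^{L-3}\Delta_\ell$. *)

theory Defs
  imports Complex_Main
begin

text \<open>Delta_l = 2^(2d-3)/N * 2^(l(d-1)), for d >= 2 (so 2d-3 is a genuine natural number).\<close>
definition Delta :: "nat \<Rightarrow> nat \<Rightarrow> nat \<Rightarrow> real" where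
  "Delta d N l = (2::real) ^ (2*d - 3) / real N * (2::real) ^ (l * (d - 1))"

fun S :: "nat \<Rightarrow> nat \<Rightarrow> nat \<Rightarrow> real" where
  "S d N 0 = 0"
| "S d N (Suc l) = S d N l + Delta d N l"

definition levelL :: "nat \<Rightarrow> nat \<Rightarrow> nat" where
  "levelL d N = (LEAST l. ((2::nat) ^ d) ^ l \<ge> N)"

end

theory Submission
  imports Defs
begin

text \<open>With \<open>q = 2^(d-1)\<close>, \<open>S_(L-2)\<close> is a geometric sum, at most its last term times
  \<open>q/(q-1)\<close>, which is \<open>2^((d-1)L-1) / (N (q-1))\<close>. Minimality of \<open>L\<close> gives
  \<open>N > b^(L-1) = 2^(d(L-1))\<close>, and the powers of two collapse to \<open>q/(q-1) * 2^-L\<close>.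
  Finally \<open>q/(q-1) \<le> 2\<close> because \<open>q \<ge> 2\<close>.\<close>

lemma geometric_sum_le:
  fixes q :: "'a :: linordered_field"
  assumes "q > 1"
  shows "(\<Sum>i<m. q ^ i) \<le> q ^ m / (q - 1)"
  using assms by (simp add: geometric_sum divide_right_mono)

lemma S_eq_sum_Delta: "S d N m = (\<Sum>l<m. Delta d N l)"
  by (induction m) simp_all

lemma Delta_eq_geometric: "Delta d N l = 2 ^ (2*d - 3) / real N * (2 ^ (d - 1)) ^ l"
  unfolding Delta_def by (metis power_mult mult.commute)

lemma S_le_last_term:
  assumes "d \<ge> 2"
  shows "S d N m \<le> 2 ^ (2*d - 3) * (2 ^ (d - 1)) ^ m / (real N * (2 ^ (d - 1) - 1))"
proof -
  have "(2::real) ^ (d - 1) > 1"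
    using assms by (simp add: one_less_power)
  then have "(\<Sum>l<m. ((2::real) ^ (d - 1)) ^ l) \<le> (2 ^ (d - 1)) ^ m / (2 ^ (d - 1) - 1)"
    by (rule geometric_sum_le)
  then have "2 ^ (2*d - 3) / real N * (\<Sum>l<m. ((2::real) ^ (d - 1)) ^ l)
      \<le> 2 ^ (2*d - 3) / real N * ((2 ^ (d - 1)) ^ m / (2 ^ (d - 1) - 1))"
    by (rule mult_left_mono) simp
  then show ?thesis
    unfolding S_eq_sum_Delta Delta_eq_geometric sum_distrib_left[symmetric]
    by simp
qed

lemma power_lt_below_levelL:
  assumes "l < levelL d N"
  shows "(2::real) ^ (d * l) < real N"
proof -
  have "\<not> N \<le> ((2::nat) ^ d) ^ l"
    using assms unfolding levelL_def by (rule not_less_Least)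
  then have "(2::nat) ^ (d * l) < N"
    by (simp add: power_mult)
  then show ?thesis
    by (metis of_nat_less_iff of_nat_numeral of_nat_power)
qed

lemma power_two_exponents_collapse:
  assumes "d \<ge> 2" and "L \<ge> 2"
  shows "(2::real) ^ (2*d - 3) * (2 ^ (d - 1)) ^ (L - 2) * 2 ^ L = 2 ^ (d * (L - 1)) * 2 ^ (d - 1)"
proof -
  obtain e k where "d = e + 2" and "L = k + 2"
    using assms by (metis le_add_diff_inverse2)
  then have "2*d - 3 + (d - 1) * (L - 2) + L = d * (L - 1) + (d - 1)"
    by (simp add: algebra_simps)
  then show ?thesis
    by (metis power_add power_mult)
qed

lemma S_le_of_power_le:
  assumes "d \<ge> 2" and "L \<ge> 2" and N_ge: "2 ^ (d * (L - 1)) \<le> real N"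
  shows "S d N (L - 2) \<le> 2 ^ (d - 1) / (2 ^ (d - 1) - 1) / 2 ^ L"
proof -
  define q :: real where "q = 2 ^ (d - 1)"
  have "q > 1"
    unfolding q_def using assms(1) by (simp add: one_less_power)
  have "S d N (L - 2) \<le> 2 ^ (2*d - 3) * q ^ (L - 2) / (real N * (q - 1))"
    unfolding q_def by (rule S_le_last_term[OF assms(1)])
  also have "2 ^ (2*d - 3) * q ^ (L - 2) = 2 ^ (d * (L - 1)) * q / 2 ^ L"
    using power_two_exponents_collapse[OF assms(1,2)] unfolding q_def by (simp add: eq_divide_eq)
  also have "2 ^ (d * (L - 1)) * q / 2 ^ L / (real N * (q - 1))
      = 2 ^ (d * (L - 1)) / real N * (q / (q - 1)) / 2 ^ L"
    by simp
  also have "\<dots> \<le> q / (q - 1) / 2 ^ L"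
  proof -
    have "2 ^ (d * (L - 1)) / real N \<le> 1"
      using N_ge by (cases "N = 0") (simp_all add: divide_le_eq_1)
    then have "2 ^ (d * (L - 1)) / real N * (q / (q - 1)) \<le> q / (q - 1)"
      using \<open>q > 1\<close> by (intro mult_left_le_one_le) simp_all
    then show ?thesis
      by (rule divide_right_mono) simp
  qed
  finally show ?thesis
    unfolding q_def .
qed

theorem lemma2p10:
  fixes d N :: nat
  assumes "d \<ge> 2" and "levelL d N \<ge> 3"
  shows "S d N (levelL d N - 2)
           \<le> (2::real) ^ (d - 1) / ((2::real) ^ (d - 1) - 1) * 2 powr (- real (levelL d N))
       \<and> (2::real) ^ (d - 1) / ((2::real) ^ (d - 1) - 1) * 2 powr (- real (levelL d N))
           \<le> 2 * 2 powr (- real (levelL d N))"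
proof -
  define L where "L = levelL d N"
  define q :: real where "q = 2 ^ (d - 1)"
  have "2 ^ (d * (L - 1)) < real N"
    using assms(2) unfolding L_def by (intro power_lt_below_levelL) simp
  then have "S d N (L - 2) \<le> q / (q - 1) / 2 ^ L"
    unfolding q_def using assms(2) unfolding L_def by (intro S_le_of_power_le[OF assms(1)]) simp_all
  then have upper: "S d N (L - 2) \<le> q / (q - 1) * 2 powr (- real L)"
    by (simp add: powr_minus powr_realpow divide_inverse)
  have "q \<ge> 2"
    unfolding q_def using assms(1) power_increasing[of 1 "d - 1" "2::real"] by simp
  then have "q / (q - 1) \<le> 2"
    by (simp add: field_simps)
  then have "q / (q - 1) * 2 powr (- real L) \<le> 2 * 2 powr (- real L)"
    by (rule mult_right_mono) simp
  with upper show ?thesis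
    unfolding L_def q_def by simp
qed

end
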